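(* Let $S$ be an epsilon-strongly $G$-graded ring such that $S_g\neq0$ for only finitely many $g\in G$. Define recursively $1_{(0)}=1_S$ and, as long as $1_{(j)}\neq0$: $S^{(j)}=1_{(j)}S$, which is an epsilon-strongly $G$-graded ring with components $1_{(j)}S_g$, identity $1_{(j)}$ and $\epsilon^{(j)}_g=1_{(j)}\epsilon_g$; let $e^{(j)}_1,\dots,e^{(j)}_{k_j}$ be the minimal elements of $B(\mathcal{E}^{(j)}_G)^*$, where $B(\mathcal{E}^{(j)}_G)$ is the multiplicative semigroup generated by $\{\epsilon^{(j)}_g:g\in G\}$; and set $1_{(j+1)}=1_{(j)}-\sum_{i=1}^{k_j}e^{(j)}_i$. Assume that at every step $j$ with $1_{(j)}\neq0$ all the minimal elements $e^{(j)}_i$ are epsilon-central in $S^{(j)}$, i.e. $N^{(j)}(e^{(j)}_i)=\{g\in G:e^{(j)}_i\epsilon^{(j)}_g=e^{(j)}_i\}$ is a subgroup of $G$. Then the process stops after finitely many steps and $S$ is a finite direct sum of rings, each of which is either of the form $e^{(j)}_iS$ and strongly $N^{(j)}(e^{(j)}_i)$-graded (by the components $e^{(j)}_iS_g$, $g\in N^{(j)}(e^{(j)}_i)$), or is a ring $1_{(l)}S$ whose induced gradation is trivial (i.e. $1_{(l)}S_g=0$ for all $g\neq e$).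
   Context: $G$ is a group with identity $e$; $S=\bigoplus_{g\in G}S_g$ is an associative unital ring graded by $G$, $R=S_e$, $XY$ denotes finite sums of products. $S$ is epsilon-strongly graded: each ideal $S_gS_{g^{-1}}$ of $R$ has an identity $\epsilon_g$ with $\epsilon_gs=s=s\epsilon_{g^{-1}}$ for $s\in S_g$; $\epsilon_e=1_S$; each $\epsilon_g$ is an idempotent in $Z(R)$. For a semigroup $B$ of idempotents containing $0$, $B^*=B\setminus\{0\}$ is ordered by $a\le b$ iff $a=ab$. A ring graded by a subgroup $H$ is strongly $H$-graded if $A_gA_h=A_{gh}$ for all $g,h\in H$. *)

theory Defs
  imports Main
begin

text \<open>Conventions: the ring S is the whole type 'a (class ring_1); the group G is the whole
type 'g (class group_add, not necessarily commutative), written additively: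
product gh = g + h, inverse -g, identity 0.  A G-grading is given by the family of
components Sg :: 'g => 'a set.\<close>

definition prodset :: "'a::ring_1 set \<Rightarrow> 'a set \<Rightarrow> 'a set" where
  "prodset X Y = {\<Sum>i<n. x i * y i | (n::nat) x y. \<forall>i<n. x i \<in> X \<and> y i \<in> Y}"

definition additive_subgroup :: "'a::ring_1 set \<Rightarrow> bool" where
  "additive_subgroup A \<longleftrightarrow> 0 \<in> A \<and> (\<forall>x\<in>A. \<forall>y\<in>A. x + y \<in> A \<and> - x \<in> A)"

definition graded :: "('g::group_add \<Rightarrow> 'a::ring_1 set) \<Rightarrow> bool" where
  "graded Sg \<longleftrightarrow>
     (\<forall>g. additive_subgroup (Sg g)) \<and>
     (\<forall>g h. \<forall>x\<in>Sg g. \<forall>y\<in>Sg h. x * y \<in> Sg (g + h)) \<and>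
     (\<forall>s. \<exists>!f. finite {g. f g \<noteq> 0} \<and> (\<forall>g. f g \<in> Sg g) \<and> s = sum f {g. f g \<noteq> 0})"

definition is_identity_of :: "'a::ring_1 set \<Rightarrow> 'a \<Rightarrow> bool" where
  "is_identity_of I e \<longleftrightarrow> e \<in> I \<and> (\<forall>x\<in>I. e * x = x \<and> x * e = x)"

definition eps :: "('g::group_add \<Rightarrow> 'a::ring_1 set) \<Rightarrow> 'g \<Rightarrow> 'a" where
  "eps Sg g = (THE e. is_identity_of (prodset (Sg g) (Sg (- g))) e)"

definition epsilon_strongly_graded :: "('g::group_add \<Rightarrow> 'a::ring_1 set) \<Rightarrow> bool" where
  "epsilon_strongly_graded Sg \<longleftrightarrow> graded Sg \<and>
     (\<exists>\<epsilon>. \<forall>g. is_identity_of (prodset (Sg g) (Sg (- g))) (\<epsilon> g) \<and>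
          (\<forall>s\<in>Sg g. \<epsilon> g * s = s \<and> s * \<epsilon> (- g) = s))"

definition sgen :: "'a::ring_1 set \<Rightarrow> 'a set" where
  "sgen A = {prod_list xs | xs. xs \<noteq> [] \<and> set xs \<subseteq> A}"

text \<open>B(E^(j)) for the ring u S, where u = 1_(j): generated by u * eps_g.\<close>
definition Bsg :: "('g::group_add \<Rightarrow> 'a::ring_1 set) \<Rightarrow> 'a \<Rightarrow> 'a set" where
  "Bsg Sg u = sgen {u * eps Sg g | g. True}"

text \<open>Minimal elements of B^* w.r.t.  a \<le> b iff a = a b.\<close>
definition minimals :: "('g::group_add \<Rightarrow> 'a::ring_1 set) \<Rightarrow> 'a \<Rightarrow> 'a set" where
  "minimals Sg u = {a \<in> Bsg Sg u - {0}. \<forall>b \<in> Bsg Sg u - {0}. b = b * a \<longrightarrow> b = a}"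

text \<open>The sequence 1_(j).  Once 1_(j) = 0 it stays 0 (B^* is then empty).\<close>
fun one_seq :: "('g::group_add \<Rightarrow> 'a::ring_1 set) \<Rightarrow> nat \<Rightarrow> 'a" where
  "one_seq Sg 0 = 1"
| "one_seq Sg (Suc j) = one_seq Sg j - sum id (minimals Sg (one_seq Sg j))"

text \<open>N^(j)(e) = {g. e * eps^(j)_g = e} with eps^(j)_g = 1_(j) eps_g.\<close>
definition Nset :: "('g::group_add \<Rightarrow> 'a::ring_1 set) \<Rightarrow> 'a \<Rightarrow> 'a \<Rightarrow> 'g set" where
  "Nset Sg u e = {g. e * (u * eps Sg g) = e}"

definition is_subgroup :: "'g::group_add set \<Rightarrow> bool" where
  "is_subgroup H \<longleftrightarrow> 0 \<in> H \<and> (\<forall>g\<in>H. \<forall>h\<in>H. g + h \<in> H) \<and> (\<forall>g\<in>H. - g \<in> H)"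

definition lmult :: "'a::ring_1 \<Rightarrow> 'a set \<Rightarrow> 'a set" where
  "lmult e A = {e * s | s. s \<in> A}"

definition strongly_graded_by :: "('g::group_add \<Rightarrow> 'a::ring_1 set) \<Rightarrow> 'a \<Rightarrow> 'g set \<Rightarrow> bool" where
  "strongly_graded_by Sg e H \<longleftrightarrow>
     (\<forall>g. g \<notin> H \<longrightarrow> lmult e (Sg g) = {0}) \<and>
     (\<forall>g\<in>H. \<forall>h\<in>H. prodset (lmult e (Sg g)) (lmult e (Sg h)) = lmult e (Sg (g + h)))"

definition trivially_graded :: "('g::group_add \<Rightarrow> 'a::ring_1 set) \<Rightarrow> 'a \<Rightarrow> bool" where
  "trivially_graded Sg e \<longleftrightarrow> (\<forall>g. g \<noteq> 0 \<longrightarrow> lmult e (Sg g) = {0})"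

end

theory Submission
  imports Defs
begin

text \<open>The idempotents \<open>\<epsilon>\<^sub>g\<close> commute with each other and with \<open>S\<^sub>e\<close>, and
  \<open>s \<epsilon>\<^sub>h = \<epsilon>\<^sub>g\<^sub>h s\<close> for \<open>s \<in> S\<^sub>g\<close>.  Hence for a central idempotent \<open>u\<close> the products
  \<open>u \<epsilon>\<^sub>g\<^sub>1 \<cdots> \<epsilon>\<^sub>g\<^sub>n\<close> form a commutative semigroup of idempotents, finite because only
  finitely many \<open>\<epsilon>\<^sub>g\<close> are nonzero.  Its minimal nonzero elements are pairwise orthogonal,
  and a minimal \<open>e\<close> satisfies \<open>e \<epsilon>\<^sub>g \<in> {0, e}\<close>; when \<open>N(e)\<close> is a subgroup, moving
  \<open>e\<close> past homogeneous elements shows that \<open>e\<close> is central and that \<open>eS\<close> is strongly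
  \<open>N(e)\<close>-graded.  So \<open>1_(j+1)\<close> is again a central idempotent; it kills the products of
  the \<open>\<epsilon>\<^sub>g\<close> generating the minimal elements of step \<open>j\<close>, so the finite set of products
  not killed by \<open>1_(j)\<close> strictly shrinks until \<open>1_(L) = 0\<close>.  The minimal elements of all
  steps then are orthogonal central idempotents summing to \<open>1\<close>.  A trivially graded
  \<open>1_(l)S\<close> has \<open>1_(l)\<close> as its only minimal element, so every summand is covered by the
  first alternative of the theorem.\<close>

definition central_idempotent :: "'a::ring_1 \<Rightarrow> bool" where
  "central_idempotent u \<longleftrightarrow> u * u = u \<and> (\<forall>x. u * x = x * u)"

lemma central_idempotent_one [simp]: "central_idempotent 1"
  by (simp add: central_idempotent_def)

lemma central_idempotentD:
  assumes "central_idempotent u"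
  shows central_idempotent_idem: "u * u = u" and central_idempotent_commute: "u * x = x * u"
  using assms unfolding central_idempotent_def by blast+

lemma central_idempotent_sum:
  assumes "finite M" and idem: "\<And>e. e \<in> M \<Longrightarrow> central_idempotent e"
    and orth: "\<And>e e'. e \<in> M \<Longrightarrow> e' \<in> M \<Longrightarrow> e \<noteq> e' \<Longrightarrow> e * e' = 0"
  shows "central_idempotent (sum id M)" and "\<And>e. e \<in> M \<Longrightarrow> sum id M * e = e"
proof -
  show absorb: "sum id M * e = e" if "e \<in> M" for e
  proof -
    have "sum id M * e = e * e + (\<Sum>e'\<in>M - {e}. e' * e)"
      using sum.remove[OF assms(1) that, of "\<lambda>e'. e' * e"] by (simp add: sum_distrib_right)
    also have "(\<Sum>e'\<in>M - {e}. e' * e) = 0"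
      using that by (intro sum.neutral) (auto intro: orth)
    finally show ?thesis
      using central_idempotent_idem[OF idem[OF that]] by simp
  qed
  have central: "sum id M * x = x * sum id M" for x
    unfolding sum_distrib_left sum_distrib_right
    using idem central_idempotent_commute by (intro sum.cong) auto
  have "sum id M * sum id M = (\<Sum>e\<in>M. e * sum id M)"
    by (simp add: sum_distrib_right)
  also have "\<dots> = sum id M"
    using absorb central by (intro sum.cong) auto
  finally show "central_idempotent (sum id M)"
    using central unfolding central_idempotent_def by blast
qed

lemma central_idempotent_diff:
  assumes u: "central_idempotent u" and m: "central_idempotent m" and "u * m = m"
  shows "central_idempotent (u - m)"
proof -
  have "(u - m) * x = x * (u - m)" for x
    using central_idempotent_commute[OF u] central_idempotent_commute[OF m]
    by (simp add: algebra_simps)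
  moreover have "(u - m) * (u - m) = u - m"
    using assms central_idempotent_commute[OF m, of u]
    by (simp add: algebra_simps central_idempotent_idem)
  ultimately show ?thesis
    unfolding central_idempotent_def by blast
qed

lemma mem_prodset:
  "z \<in> prodset X Y \<longleftrightarrow> (\<exists>(n::nat) x y. z = (\<Sum>i<n. x i * y i) \<and> (\<forall>i<n. x i \<in> X \<and> y i \<in> Y))"
  unfolding prodset_def by auto

lemma sum_in_prodset:
  "\<forall>i<n. x i \<in> X \<and> y i \<in> Y \<Longrightarrow> (\<Sum>i<(n::nat). x i * y i) \<in> prodset X Y"
  unfolding mem_prodset by blast

lemma additive_subgroup_sum:
  assumes "additive_subgroup A" and "\<forall>i<(n::nat). x i \<in> A"
  shows "(\<Sum>i<n. x i) \<in> A"
  using assms(2) by (induction n) (use assms(1) in \<open>auto simp: additive_subgroup_def\<close>)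

lemma prodset_subset:
  assumes "additive_subgroup C" and "\<And>a b. a \<in> A \<Longrightarrow> b \<in> B \<Longrightarrow> a * b \<in> C"
  shows "prodset A B \<subseteq> C"
proof
  fix z assume "z \<in> prodset A B"
  then obtain n :: nat and a b where "z = (\<Sum>i<n. a i * b i)" "\<forall>i<n. a i \<in> A \<and> b i \<in> B"
    unfolding mem_prodset by blast
  then show "z \<in> C"
    using additive_subgroup_sum[OF assms(1), of n "\<lambda>i. a i * b i"] assms(2) by simp
qed

lemma prodset_mult_left:
  assumes "\<And>a. a \<in> A \<Longrightarrow> r * a \<in> A'" and "x \<in> prodset A B"
  shows "r * x \<in> prodset A' B"
proof -
  obtain n :: nat and a b where x: "x = (\<Sum>i<n. a i * b i)" "\<forall>i<n. a i \<in> A \<and> b i \<in> B"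
    using assms(2) unfolding mem_prodset by blast
  have "r * x = (\<Sum>i<n. (r * a i) * b i)"
    by (simp add: x sum_distrib_left mult.assoc)
  then show ?thesis
    using sum_in_prodset[of n "\<lambda>i. r * a i" A' b B] x(2) assms(1) by simp
qed

lemma prodset_mult_right:
  assumes "\<And>b. b \<in> B \<Longrightarrow> b * r \<in> B'" and "x \<in> prodset A B"
  shows "x * r \<in> prodset A B'"
proof -
  obtain n :: nat and a b where x: "x = (\<Sum>i<n. a i * b i)" "\<forall>i<n. a i \<in> A \<and> b i \<in> B"
    using assms(2) unfolding mem_prodset by blast
  have "x * r = (\<Sum>i<n. a i * (b i * r))"
    by (simp add: x sum_distrib_right mult.assoc)
  then show ?thesis
    using sum_in_prodset[of n a A "\<lambda>i. b i * r" B'] x(2) assms(1) by simp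
qed

lemma prodset_left_identity:
  assumes "\<And>a. a \<in> A \<Longrightarrow> c * a = a" and "x \<in> prodset A B"
  shows "c * x = x"
proof -
  obtain n :: nat and a b where x: "x = (\<Sum>i<n. a i * b i)" "\<forall>i<n. a i \<in> A \<and> b i \<in> B"
    using assms(2) unfolding mem_prodset by blast
  then show ?thesis
    using assms(1) by (simp add: sum_distrib_left mult.assoc[symmetric])
qed

lemma prodset_right_identity:
  assumes "\<And>b. b \<in> B \<Longrightarrow> b * c = b" and "x \<in> prodset A B"
  shows "x * c = x"
proof -
  obtain n :: nat and a b where x: "x = (\<Sum>i<n. a i * b i)" "\<forall>i<n. a i \<in> A \<and> b i \<in> B"
    using assms(2) unfolding mem_prodset by blast
  then show ?thesis
    using assms(1) by (simp add: sum_distrib_right mult.assoc)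
qed

lemma prodset_lmult:
  assumes "central_idempotent e"
  shows "prodset (lmult e A) (lmult e B) = lmult e (prodset A B)"
proof -
  have ee: "(e * a) * (e * b) = e * (a * b)" for a b
    using assms by (metis central_idempotentD mult.assoc)
  show ?thesis
  proof
    show "prodset (lmult e A) (lmult e B) \<subseteq> lmult e (prodset A B)"
    proof
      fix z assume "z \<in> prodset (lmult e A) (lmult e B)"
      then obtain n :: nat and x y where z: "z = (\<Sum>i<n. x i * y i)"
        and xy: "\<forall>i<n. x i \<in> lmult e A \<and> y i \<in> lmult e B"
        unfolding mem_prodset by blast
      define a where "a i = (SOME a. a \<in> A \<and> x i = e * a)" for i
      define b where "b i = (SOME b. b \<in> B \<and> y i = e * b)" for i
      have ab: "a i \<in> A \<and> x i = e * a i" "b i \<in> B \<and> y i = e * b i" if "i < n" for i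
      proof -
        have "\<exists>a. a \<in> A \<and> x i = e * a" "\<exists>b. b \<in> B \<and> y i = e * b"
          using xy that unfolding lmult_def by blast+
        from someI_ex[OF this(1)] someI_ex[OF this(2)]
        show "a i \<in> A \<and> x i = e * a i" "b i \<in> B \<and> y i = e * b i"
          unfolding a_def b_def by blast+
      qed
      have "z = e * (\<Sum>i<n. a i * b i)"
        using ab by (simp add: z ee sum_distrib_left)
      moreover have "(\<Sum>i<n. a i * b i) \<in> prodset A B"
        using ab by (simp add: sum_in_prodset)
      ultimately show "z \<in> lmult e (prodset A B)"
        unfolding lmult_def by blast
    qed
  next
    show "lmult e (prodset A B) \<subseteq> prodset (lmult e A) (lmult e B)"
    proof
      fix w assume "w \<in> lmult e (prodset A B)"
      then obtain n :: nat and a b where w: "w = e * (\<Sum>i<n. a i * b i)"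
        and ab: "\<forall>i<n. a i \<in> A \<and> b i \<in> B"
        unfolding lmult_def mem_prodset by blast
      have "w = (\<Sum>i<n. (e * a i) * (e * b i))"
        by (simp add: w ee sum_distrib_left)
      moreover have "\<forall>i<n. e * a i \<in> lmult e A \<and> e * b i \<in> lmult e B"
        using ab unfolding lmult_def by blast
      ultimately show "w \<in> prodset (lmult e A) (lmult e B)"
        using sum_in_prodset[of n "\<lambda>i. e * a i" "lmult e A" "\<lambda>i. e * b i" "lmult e B"] by simp
    qed
  qed
qed

definition commutative_band :: "'a::ring_1 set \<Rightarrow> bool" where
  "commutative_band X \<longleftrightarrow> (\<forall>a\<in>X. \<forall>b\<in>X. a * b \<in> X \<and> a * b = b * a) \<and> (\<forall>a\<in>X. a * a = a)"

definition minimal_in :: "'a::ring_1 set \<Rightarrow> 'a \<Rightarrow> bool" where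
  "minimal_in X a \<longleftrightarrow> a \<in> X - {0} \<and> (\<forall>b\<in>X - {0}. b = b * a \<longrightarrow> b = a)"

lemma commutative_bandD:
  assumes "commutative_band X" and "a \<in> X" and "b \<in> X"
  shows commutative_band_mult: "a * b \<in> X" and commutative_band_commute: "a * b = b * a"
  using assms unfolding commutative_band_def by blast+

lemma commutative_band_idem: "commutative_band X \<Longrightarrow> a \<in> X \<Longrightarrow> a * a = a"
  unfolding commutative_band_def by blast

lemma minimal_in_exists:
  assumes band: "commutative_band X" and "finite X" and "x \<in> X" and "x \<noteq> 0"
  shows "\<exists>a. minimal_in X a"
proof -
  define below where "below a = {y \<in> X - {0}. y = y * a}" for a
  obtain a where a: "a \<in> X - {0}" and least: "\<And>b. b \<in> X - {0} \<Longrightarrow> card (below a) \<le> card (below b)"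
    using ex_has_least_nat[of "\<lambda>a. a \<in> X - {0}" x "\<lambda>a. card (below a)"] assms(3,4) by blast
  have "b = a" if b: "b \<in> X - {0}" "b = b * a" for b
  proof (rule ccontr)
    assume "b \<noteq> a"
    have "y = y * a" if "y = y * b" for y
      using that b(2) by (metis mult.assoc)
    then have "below b \<subseteq> below a"
      unfolding below_def by blast
    moreover have "a \<in> below a"
      using a commutative_band_idem[OF band, of a] unfolding below_def by simp
    moreover have "a \<noteq> a * b"
      using b \<open>b \<noteq> a\<close> commutative_band_commute[OF band, of a b] a by (metis DiffD1)
    then have "a \<notin> below b"
      unfolding below_def by blast
    moreover have "finite (below a)"
      using assms(2) unfolding below_def by simp
    ultimately have "card (below b) < card (below a)"
      by (metis psubsetI psubset_card_mono)
    with least[OF b(1)] show False by simp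
  qed
  with a show ?thesis
    unfolding minimal_in_def by blast
qed

lemma minimal_in_mult:
  assumes band: "commutative_band X" and a: "minimal_in X a" and b: "b \<in> X"
  shows "a * b = 0 \<or> a * b = a"
proof (cases "a * b = 0")
  case False
  have aX: "a \<in> X"
    using a unfolding minimal_in_def by blast
  have "a * b = a * (a * b)"
    using commutative_band_idem[OF band aX] by (simp add: mult.assoc[symmetric])
  also have "\<dots> = (a * b) * a"
    using commutative_band_commute[OF band b aX] by (simp add: mult.assoc)
  finally have "a * b = (a * b) * a" .
  moreover have "a * b \<in> X - {0}"
    using commutative_band_mult[OF band aX b] False by blast
  ultimately show ?thesis
    using a unfolding minimal_in_def by blast
qed simp

lemma minimal_in_orthogonal:
  assumes band: "commutative_band X" and a: "minimal_in X a" and b: "minimal_in X b" and "a \<noteq> b"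
  shows "a * b = 0"
proof -
  have "a \<in> X" "b \<in> X"
    using a b unfolding minimal_in_def by blast+
  then have "a * b = b * a" "a * b = 0 \<or> a * b = a" "b * a = 0 \<or> b * a = b"
    using commutative_band_commute[OF band] minimal_in_mult[OF band a] minimal_in_mult[OF band b]
    by blast+
  with \<open>a \<noteq> b\<close> show ?thesis
    by metis
qed

lemma is_identity_of_unique: "is_identity_of I a \<Longrightarrow> is_identity_of I b \<Longrightarrow> a = b"
  unfolding is_identity_of_def by metis

locale eps_strongly_graded_ring =
  fixes Sg :: "'g::group_add \<Rightarrow> 'a::ring_1 set"
  assumes eps_strongly_graded: "epsilon_strongly_graded Sg"
begin

abbreviation ep :: "'g \<Rightarrow> 'a" where "ep \<equiv> eps Sg"

lemma additive_subgroup_component: "additive_subgroup (Sg g)"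
  using eps_strongly_graded by (simp add: epsilon_strongly_graded_def graded_def)

lemma zero_in_component: "0 \<in> Sg g"
  using additive_subgroup_component by (simp add: additive_subgroup_def)

lemma component_mult: "x \<in> Sg g \<Longrightarrow> y \<in> Sg h \<Longrightarrow> x * y \<in> Sg (g + h)"
  using eps_strongly_graded by (simp add: epsilon_strongly_graded_def graded_def)

lemma homogeneous_decomposition:
  obtains f where "\<And>g. f g \<in> Sg g" and "s = sum f {g. f g \<noteq> 0}"
proof -
  have "\<exists>!f. finite {g. f g \<noteq> 0} \<and> (\<forall>g. f g \<in> Sg g) \<and> s = sum f {g. f g \<noteq> 0}"
    using eps_strongly_graded by (simp add: epsilon_strongly_graded_def graded_def)
  then show thesis
    using that by blast
qed

lemma commute_if_commute_homogeneous:
  assumes "\<And>g s. s \<in> Sg g \<Longrightarrow> a * s = s * a"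
  shows "a * x = x * a"
proof -
  obtain f where f: "\<And>g. f g \<in> Sg g" and x: "x = sum f {g. f g \<noteq> 0}"
    using homogeneous_decomposition[where s = x] by blast
  have "a * f g = f g * a" for g
    using assms f by blast
  then show ?thesis
    unfolding x sum_distrib_left sum_distrib_right by simp
qed

lemma left_identity_if_homogeneous:
  assumes "\<And>g s. s \<in> Sg g \<Longrightarrow> a * s = s"
  shows "a * x = x"
proof -
  obtain f where f: "\<And>g. f g \<in> Sg g" and x: "x = sum f {g. f g \<noteq> 0}"
    using homogeneous_decomposition[where s = x] by blast
  have "a * f g = f g" for g
    using assms f by blast
  then show ?thesis
    unfolding x sum_distrib_left by simp
qed

lemma eps_characterization:
  "is_identity_of (prodset (Sg g) (Sg (- g))) (ep g) \<and> (\<forall>s\<in>Sg g. ep g * s = s \<and> s * ep (- g) = s)"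
proof -
  obtain \<epsilon> where \<epsilon>: "\<And>g. is_identity_of (prodset (Sg g) (Sg (- g))) (\<epsilon> g) \<and>
      (\<forall>s\<in>Sg g. \<epsilon> g * s = s \<and> s * \<epsilon> (- g) = s)"
    using eps_strongly_graded unfolding epsilon_strongly_graded_def by blast
  have "ep = \<epsilon>"
    unfolding eps_def using \<epsilon> is_identity_of_unique by blast
  with \<epsilon> show ?thesis by simp
qed

lemma eps_left: "s \<in> Sg g \<Longrightarrow> ep g * s = s"
  using eps_characterization by blast

lemma eps_right: "s \<in> Sg (- g) \<Longrightarrow> s * ep g = s"
  using eps_characterization[of "- g"] by simp

lemma eps_in_prodset: "ep g \<in> prodset (Sg g) (Sg (- g))"
  using eps_characterization by (simp add: is_identity_of_def)

lemma eps_idem: "ep g * ep g = ep g"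
  using prodset_left_identity[OF eps_left eps_in_prodset] .

lemma eps_in_zero_component: "ep g \<in> Sg 0"
  using prodset_subset[OF additive_subgroup_component component_mult] eps_in_prodset[of g]
  by fastforce

lemma eps_shift:
  assumes s: "s \<in> Sg g"
  shows "s * ep h = ep (g + h) * s"
proof -
  have "s * ep h \<in> prodset (Sg (g + h)) (Sg (- h))"
    using prodset_mult_left[OF component_mult[OF s] eps_in_prodset] .
  then have left: "ep (g + h) * (s * ep h) = s * ep h"
    using prodset_left_identity eps_left by blast
  have "b * s \<in> Sg (- h)" if "b \<in> Sg (- (g + h))" for b
    using component_mult[OF that s] by (simp add: minus_add add.assoc)
  then have "ep (g + h) * s \<in> prodset (Sg (g + h)) (Sg (- h))"
    using prodset_mult_right eps_in_prodset by blast
  then have right: "(ep (g + h) * s) * ep h = ep (g + h) * s"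
    using prodset_right_identity eps_right by blast
  show ?thesis
    using left right by (metis mult.assoc)
qed

lemma eps_commute: "ep g * ep h = ep h * ep g"
  using eps_shift[OF eps_in_zero_component] by simp

lemma eps_zero [simp]: "ep 0 = 1"
proof -
  have "ep 0 * s = s" if "s \<in> Sg g" for g s
    using eps_shift[OF that, of "- g"] eps_right[of s "- g"] that by simp
  then have "ep 0 * 1 = 1"
    by (rule left_identity_if_homogeneous)
  then show ?thesis by simp
qed

lemma eps_eq_zero: "Sg g = {0} \<Longrightarrow> ep g = 0"
  using prodset_left_identity[of "Sg g" 0 "ep g", OF _ eps_in_prodset] by simp

lemma eps_mult_in_prodset:
  assumes "z \<in> Sg (g + h)"
  shows "ep g * z \<in> prodset (Sg g) (Sg h)"
proof -
  have "b * z \<in> Sg h" if "b \<in> Sg (- g)" for b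
    using component_mult[OF that assms] by (simp add: add.assoc[symmetric])
  then show ?thesis
    using prodset_mult_right eps_in_prodset by blast
qed

abbreviation eps_prod :: "'g list \<Rightarrow> 'a" where
  "eps_prod gs \<equiv> prod_list (map ep gs)"

lemma eps_prod_commute_eps: "ep h * eps_prod gs = eps_prod gs * ep h"
proof (induction gs)
  case (Cons g gs)
  then show ?case
    by (simp add: mult.assoc[symmetric] eps_commute) (simp add: mult.assoc)
qed simp

lemma eps_prod_commute: "eps_prod gs * eps_prod ks = eps_prod ks * eps_prod gs"
proof (induction gs)
  case (Cons g gs)
  then show ?case
    by (simp add: mult.assoc eps_prod_commute_eps) (simp add: mult.assoc[symmetric] eps_prod_commute_eps)
qed simp

lemma eps_prod_absorb_eps: "g \<in> set ks \<Longrightarrow> eps_prod ks * ep g = eps_prod ks"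
proof (induction ks)
  case (Cons k ks)
  show ?case
  proof (cases "g = k")
    case True
    then show ?thesis
      by (simp add: mult.assoc eps_prod_commute_eps[symmetric]) (simp add: mult.assoc[symmetric] eps_idem)
  next
    case False
    with Cons show ?thesis
      by (simp add: mult.assoc)
  qed
qed simp

lemma eps_prod_absorb: "set gs \<subseteq> set ks \<Longrightarrow> eps_prod ks * eps_prod gs = eps_prod ks"
proof (induction gs)
  case (Cons g gs)
  then show ?case
    by (simp add: mult.assoc[symmetric] eps_prod_absorb_eps)
qed simp

lemma eps_prod_set_eq: "set gs = set ks \<Longrightarrow> eps_prod gs = eps_prod ks"
  by (metis eps_prod_absorb eps_prod_commute order_refl)

lemma eps_prod_idem: "eps_prod gs * eps_prod gs = eps_prod gs"
  by (simp add: eps_prod_absorb)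

lemma eps_prod_eq_zero: "g \<in> set gs \<Longrightarrow> Sg g = {0} \<Longrightarrow> eps_prod gs = 0"
  using eps_prod_absorb_eps[of g gs] eps_eq_zero by simp

lemma eps_prod_shift: "s \<in> Sg g \<Longrightarrow> s * eps_prod ks = eps_prod (map ((+) g) ks) * s"
proof (induction ks)
  case (Cons k ks)
  then show ?case
    by (simp add: mult.assoc[symmetric] eps_shift) (simp add: mult.assoc)
qed simp

lemma eps_prod_shift_left: "s \<in> Sg g \<Longrightarrow> eps_prod ks * s = s * eps_prod (map ((+) (- g)) ks)"
  using eps_prod_shift[of s g "map ((+) (- g)) ks"] by (simp add: comp_def add.assoc[symmetric])

lemma Bsg_eq:
  assumes "central_idempotent u"
  shows "Bsg Sg u = {u * eps_prod gs | gs. gs \<noteq> []}"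
proof -
  have prod: "prod_list (map (\<lambda>g. u * ep g) gs) = u * eps_prod gs" if "gs \<noteq> []" for gs
    using that
  proof (induction gs)
    case (Cons g gs)
    show ?case
    proof (cases "gs = []")
      case False
      then have "prod_list (map (\<lambda>g. u * ep g) (g # gs)) = (u * ep g) * (u * eps_prod gs)"
        using Cons by simp
      also have "\<dots> = (u * u) * (ep g * eps_prod gs)"
        using central_idempotent_commute[OF assms, of "ep g"] by (metis mult.assoc)
      finally show ?thesis
        using central_idempotent_idem[OF assms] by simp
    qed simp
  qed simp
  have "Bsg Sg u = {prod_list (map (\<lambda>g. u * ep g) gs) | gs. gs \<noteq> []}"
    unfolding Bsg_def sgen_def
  proof (intro set_eqI iffI)
    fix x assume "x \<in> {prod_list xs | xs. xs \<noteq> [] \<and> set xs \<subseteq> {u * ep g | g. True}}"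
    then obtain xs where x: "x = prod_list xs" "xs \<noteq> []" "set xs \<subseteq> {u * ep g | g. True}"
      by blast
    then obtain gs where "xs = map (\<lambda>g. u * ep g) gs"
      using ex_map_conv[of xs "\<lambda>g. u * ep g"] by blast
    with x show "x \<in> {prod_list (map (\<lambda>g. u * ep g) gs) | gs. gs \<noteq> []}"
      by blast
  next
    fix x assume "x \<in> {prod_list (map (\<lambda>g. u * ep g) gs) | gs. gs \<noteq> []}"
    then obtain gs where "x = prod_list (map (\<lambda>g. u * ep g) gs)" "gs \<noteq> []"
      by blast
    then show "x \<in> {prod_list xs | xs. xs \<noteq> [] \<and> set xs \<subseteq> {u * ep g | g. True}}"
      by (intro CollectI exI[of _ "map (\<lambda>g. u * ep g) gs"]) auto
  qed
  also have "\<dots> = {u * eps_prod gs | gs. gs \<noteq> []}"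
    by (rule Collect_cong) (metis prod)
  finally show ?thesis .
qed

lemma Bsg_commutative_band:
  assumes "central_idempotent u"
  shows "commutative_band (Bsg Sg u)"
proof -
  have mult: "(u * eps_prod gs) * (u * eps_prod ks) = u * eps_prod (gs @ ks)" for gs ks
    using central_idempotentD[OF assms] by (metis mult.assoc prod_list.append map_append)
  show ?thesis
    unfolding commutative_band_def
  proof (intro conjI ballI)
    fix a b assume "a \<in> Bsg Sg u" "b \<in> Bsg Sg u"
    then obtain gs ks where "a = u * eps_prod gs" "gs \<noteq> []" "b = u * eps_prod ks"
      unfolding Bsg_eq[OF assms] by blast
    then have "a * b = u * eps_prod (gs @ ks)" "gs @ ks \<noteq> []" "a * b = b * a"
      by (simp_all only: mult) (simp_all add: eps_prod_commute)
    then show "a * b \<in> Bsg Sg u" "a * b = b * a"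
      unfolding Bsg_eq[OF assms] by blast+
  next
    fix a assume "a \<in> Bsg Sg u"
    then obtain gs where "a = u * eps_prod gs"
      unfolding Bsg_eq[OF assms] by blast
    then show "a * a = a"
      by (simp add: mult eps_prod_idem)
  qed
qed

lemma Bsg_absorb:
  assumes "central_idempotent u" and "a \<in> Bsg Sg u"
  shows "u * a = a"
  using assms central_idempotent_idem[OF assms(1)] unfolding Bsg_eq[OF assms(1)]
  by (auto simp: mult.assoc[symmetric])

lemma Bsg_contains: "central_idempotent u \<Longrightarrow> u \<in> Bsg Sg u"
  unfolding Bsg_eq by (intro CollectI exI[of _ "[0]"]) simp

lemma Bsg_zero: "Bsg Sg 0 = {0}"
  using Bsg_eq[of 0] by (auto simp: central_idempotent_def intro: exI[of _ "[0]"])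

lemma minimals_zero [simp]: "minimals Sg 0 = {}"
  by (simp add: minimals_def Bsg_zero)

lemma mem_minimals: "e \<in> minimals Sg u \<longleftrightarrow> minimal_in (Bsg Sg u) e"
  by (simp add: minimals_def minimal_in_def)

context
  fixes u e
  assumes u: "central_idempotent u" and e: "e \<in> minimals Sg u"
begin

lemma minimal_nonzero: "e \<noteq> 0"
  using e by (simp add: minimals_def)

lemma minimal_in_Bsg: "e \<in> Bsg Sg u"
  using e by (simp add: minimals_def)

lemma minimal_idem: "e * e = e"
  using commutative_band_idem[OF Bsg_commutative_band[OF u] minimal_in_Bsg] .

lemma minimal_absorb: "u * e = e" "e * u = e"
  using Bsg_absorb[OF u minimal_in_Bsg] central_idempotent_commute[OF u, of e] by simp_all

lemma minimal_mult_eps: "e * ep g = (if g \<in> Nset Sg u e then e else 0)"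
proof -
  have "u * ep g \<in> Bsg Sg u"
    unfolding Bsg_eq[OF u] by (intro CollectI exI[of _ "[g]"]) simp
  then have "e * (u * ep g) = 0 \<or> e * (u * ep g) = e"
    using minimal_in_mult[OF Bsg_commutative_band[OF u]] e by (simp add: mem_minimals)
  moreover have "e * (u * ep g) = e * ep g"
    using minimal_absorb by (simp add: mult.assoc[symmetric])
  ultimately show ?thesis
    unfolding Nset_def using minimal_nonzero by auto
qed

lemma minimal_generators:
  obtains gs where "e = u * eps_prod gs" and "set gs \<subseteq> Nset Sg u e"
proof -
  obtain gs where gs: "e = u * eps_prod gs"
    using minimal_in_Bsg unfolding Bsg_eq[OF u] by blast
  have "g \<in> Nset Sg u e" if "g \<in> set gs" for g
  proof -
    have "e * ep g = e"
      using eps_prod_absorb_eps[OF that] by (simp add: gs mult.assoc)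
    then show ?thesis
      using minimal_mult_eps[of g] minimal_nonzero by (auto split: if_splits)
  qed
  with gs that show thesis
    by blast
qed

lemma minimal_mult_eps_prod: "set ks \<subseteq> Nset Sg u e \<Longrightarrow> e * eps_prod ks = e"
proof (induction ks)
  case (Cons k ks)
  then show ?case
    using minimal_mult_eps[of k] by (simp add: mult.assoc[symmetric])
qed simp

lemma eps_prod_mult_minimal: "eps_prod ks * e = e * eps_prod ks"
proof -
  obtain gs where gs: "e = u * eps_prod gs"
    by (rule minimal_generators)
  have "eps_prod ks * (u * eps_prod gs) = u * (eps_prod ks * eps_prod gs)"
    using central_idempotent_commute[OF u, of "eps_prod ks"] by (metis mult.assoc)
  then show ?thesis
    by (simp add: gs eps_prod_commute[of ks] mult.assoc)
qed

context
  assumes subgroup: "is_subgroup (Nset Sg u e)"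
begin

lemma minimal_commute_homogeneous:
  assumes s: "s \<in> Sg g"
  shows "e * s = s * e"
proof (cases "g \<in> Nset Sg u e")
  case True
  txt \<open>Both \<open>s e\<close> and \<open>e s\<close> are \<open>s\<close> times a product of \<open>\<epsilon>\<^sub>h\<close> with \<open>h \<in> N(e)\<close>, which \<open>e\<close>
    absorbs; hence \<open>e s = e s e = s e\<close>.\<close>
  obtain gs where gs: "e = u * eps_prod gs" and N: "set gs \<subseteq> Nset Sg u e"
    by (rule minimal_generators)
  have shifted: "set (map ((+) h) gs) \<subseteq> Nset Sg u e" if "h \<in> Nset Sg u e" for h
    using N that subgroup unfolding is_subgroup_def by auto
  have "- g \<in> Nset Sg u e"
    using True subgroup unfolding is_subgroup_def by blast
  have "s * e = (s * u) * eps_prod gs"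
    by (simp add: gs mult.assoc)
  also have "\<dots> = u * (s * eps_prod gs)"
    using central_idempotent_commute[OF u, of s] by (metis mult.assoc)
  also have "\<dots> = u * eps_prod (map ((+) g) gs) * s"
    using eps_prod_shift[OF s, of gs] by (simp add: mult.assoc)
  finally have se: "s * e = u * eps_prod (map ((+) g) gs) * s" .
  have "e * s = u * (eps_prod gs * s)"
    by (simp add: gs mult.assoc)
  also have "\<dots> = (u * s) * eps_prod (map ((+) (- g)) gs)"
    using eps_prod_shift_left[OF s, of gs] by (simp add: mult.assoc)
  also have "\<dots> = s * (u * eps_prod (map ((+) (- g)) gs))"
    using central_idempotent_commute[OF u, of s] by (metis mult.assoc)
  finally have es: "e * s = s * (u * eps_prod (map ((+) (- g)) gs))" .
  have "e * (s * e) = e * s"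
    using se minimal_mult_eps_prod[OF shifted[OF True]] minimal_absorb(2)
    by (simp add: mult.assoc[symmetric])
  moreover have "(e * s) * e = s * e"
    using es minimal_mult_eps_prod[OF shifted[OF \<open>- g \<in> Nset Sg u e\<close>]]
      eps_prod_mult_minimal[of "map ((+) (- g)) gs"] minimal_absorb(1)
    by (simp add: mult.assoc)
  ultimately show ?thesis
    by (metis mult.assoc)
next
  case False
  then have "- g \<notin> Nset Sg u e"
    using subgroup unfolding is_subgroup_def by force
  have "e * s = (e * ep g) * s"
    using eps_left[OF s] by (simp add: mult.assoc)
  moreover have "s * e = s * (ep (- g) * e)"
    using eps_right[of s "- g"] s by (simp add: mult.assoc[symmetric])
  then have "s * e = s * (e * ep (- g))"
    using eps_prod_mult_minimal[of "[- g]"] by simp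
  ultimately show ?thesis
    using False \<open>- g \<notin> Nset Sg u e\<close> by (simp add: minimal_mult_eps)
qed

lemma minimal_central_idempotent: "central_idempotent e"
proof -
  have "e * x = x * e" for x
    by (rule commute_if_commute_homogeneous) (rule minimal_commute_homogeneous)
  with minimal_idem show ?thesis
    unfolding central_idempotent_def by blast
qed

lemma minimal_strongly_graded: "strongly_graded_by Sg e (Nset Sg u e)"
  unfolding strongly_graded_by_def
proof (intro conjI allI impI ballI)
  fix g assume "g \<notin> Nset Sg u e"
  then have "e * s = 0" if "s \<in> Sg g" for s
    using eps_left[OF that] minimal_mult_eps[of g] by (metis mult.assoc mult_zero_left)
  then show "lmult e (Sg g) = {0}"
    unfolding lmult_def using zero_in_component[of g] by force
next
  fix g h assume g: "g \<in> Nset Sg u e" and "h \<in> Nset Sg u e"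
  have "lmult e (Sg (g + h)) \<subseteq> lmult e (prodset (Sg g) (Sg h))"
  proof
    fix w assume "w \<in> lmult e (Sg (g + h))"
    then obtain z where z: "z \<in> Sg (g + h)" and w: "w = e * z"
      unfolding lmult_def by blast
    have "w = e * (ep g * z)"
      using minimal_mult_eps[of g] g by (simp add: w mult.assoc[symmetric])
    with eps_mult_in_prodset[OF z] show "w \<in> lmult e (prodset (Sg g) (Sg h))"
      unfolding lmult_def by blast
  qed
  moreover have "lmult e (prodset (Sg g) (Sg h)) \<subseteq> lmult e (Sg (g + h))"
    using prodset_subset[OF additive_subgroup_component component_mult] unfolding lmult_def by blast
  ultimately show "prodset (lmult e (Sg g)) (lmult e (Sg h)) = lmult e (Sg (g + h))"
    unfolding prodset_lmult[OF minimal_central_idempotent] by blast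
qed

end

end

end

locale finitely_supported_eps_graded_ring = eps_strongly_graded_ring +
  assumes finite_support: "finite {g. Sg g \<noteq> {0}}"
begin

lemma finite_eps_prods: "finite (range eps_prod)"
proof (rule finite_subset)
  let ?T = "{g. Sg g \<noteq> {0}}"
  show "range eps_prod \<subseteq> insert 0 (eps_prod ` {xs. set xs \<subseteq> ?T \<and> distinct xs})"
  proof
    fix p assume "p \<in> range eps_prod"
    then obtain gs where p: "p = eps_prod gs"
      by blast
    show "p \<in> insert 0 (eps_prod ` {xs. set xs \<subseteq> ?T \<and> distinct xs})"
    proof (cases "set gs \<subseteq> ?T")
      case True
      then have "remdups gs \<in> {xs. set xs \<subseteq> ?T \<and> distinct xs}"
        by simp
      moreover have "p = eps_prod (remdups gs)"
        using eps_prod_set_eq[of gs "remdups gs"] p by simp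
      ultimately show ?thesis
        by blast
    next
      case False
      then show ?thesis
        using eps_prod_eq_zero p by auto
    qed
  qed
  show "finite (insert 0 (eps_prod ` {xs. set xs \<subseteq> ?T \<and> distinct xs}))"
    using finite_subset_distinct[OF finite_support] by simp
qed

lemma finite_Bsg: "central_idempotent u \<Longrightarrow> finite (Bsg Sg u)"
  unfolding Bsg_eq
  by (rule finite_subset[of _ "(*) u ` range eps_prod"]) (auto simp: finite_eps_prods)

lemma finite_minimals: "central_idempotent u \<Longrightarrow> finite (minimals Sg u)"
  using finite_Bsg by (rule finite_subset[rotated]) (auto simp: minimals_def)

lemma minimals_nonempty:
  assumes "central_idempotent u" and "u \<noteq> 0"
  shows "minimals Sg u \<noteq> {}"
proof -
  obtain e where "minimal_in (Bsg Sg u) e"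
    using minimal_in_exists[OF Bsg_commutative_band finite_Bsg Bsg_contains] assms by blast
  then show ?thesis
    by (auto simp: mem_minimals)
qed

lemma sum_minimals:
  assumes u: "central_idempotent u"
    and subgroup: "\<And>e. e \<in> minimals Sg u \<Longrightarrow> is_subgroup (Nset Sg u e)"
  shows "central_idempotent (sum id (minimals Sg u))"
    and "u * sum id (minimals Sg u) = sum id (minimals Sg u)"
    and "\<And>e. e \<in> minimals Sg u \<Longrightarrow> sum id (minimals Sg u) * e = e"
proof -
  have orth: "e * e' = 0" if "e \<in> minimals Sg u" "e' \<in> minimals Sg u" "e \<noteq> e'" for e e'
    using minimal_in_orthogonal[OF Bsg_commutative_band[OF u]] that unfolding mem_minimals by blast
  have idem: "central_idempotent e" if "e \<in> minimals Sg u" for e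
    using minimal_central_idempotent[OF u that subgroup[OF that]] .
  show "central_idempotent (sum id (minimals Sg u))"
    and "\<And>e. e \<in> minimals Sg u \<Longrightarrow> sum id (minimals Sg u) * e = e"
    using central_idempotent_sum[OF finite_minimals[OF u] idem orth] by blast+
  show "u * sum id (minimals Sg u) = sum id (minimals Sg u)"
    using minimal_absorb(1)[OF u] by (simp add: sum_distrib_left)
qed

end

locale eps_central_graded_ring = finitely_supported_eps_graded_ring +
  assumes eps_central: "\<forall>j. one_seq Sg j \<noteq> 0 \<longrightarrow>
    (\<forall>e \<in> minimals Sg (one_seq Sg j). is_subgroup (Nset Sg (one_seq Sg j) e))"
begin

abbreviation level where
  "level j \<equiv> one_seq Sg j"

lemma subgroup_Nset_level: "e \<in> minimals Sg (level j) \<Longrightarrow> is_subgroup (Nset Sg (level j) e)"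
  using eps_central by (cases "level j = 0") auto

lemma central_idempotent_level: "central_idempotent (level j)"
proof (induction j)
  case (Suc j)
  then show ?case
    using central_idempotent_diff sum_minimals(1,2)[OF Suc subgroup_Nset_level] by simp
qed simp

lemma level_Suc_mult: "level (Suc j) * level j = level (Suc j)"
  using central_idempotent_level[of j] sum_minimals(2)[OF central_idempotent_level subgroup_Nset_level]
    central_idempotent_commute[OF sum_minimals(1)[OF central_idempotent_level subgroup_Nset_level]]
  by (simp add: left_diff_distrib central_idempotent_idem)

lemma level_Suc_mult_minimal: "e \<in> minimals Sg (level j) \<Longrightarrow> level (Suc j) * e = 0"
  using sum_minimals(3)[OF central_idempotent_level subgroup_Nset_level]
    minimal_absorb(1)[OF central_idempotent_level]
  by (simp add: left_diff_distrib)

lemma level_antimono: "k \<le> j \<Longrightarrow> level j * level k = level j"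
proof (induction j rule: dec_induct)
  case base
  then show ?case
    using central_idempotent_idem[OF central_idempotent_level] .
next
  case (step j)
  then show ?case
    by (metis level_Suc_mult mult.assoc)
qed

lemma minimals_level_orthogonal_less:
  assumes e: "e \<in> minimals Sg (level i)" and e': "e' \<in> minimals Sg (level j)" and "i < j"
  shows "e' * e = 0"
proof -
  have "e' * e = e' * level j * level (Suc i) * e"
    using minimal_absorb(2)[OF central_idempotent_level e'] level_antimono[of "Suc i" j] \<open>i < j\<close>
    by (metis Suc_leI mult.assoc)
  also have "\<dots> = 0"
    using level_Suc_mult_minimal[OF e] by (metis mult.assoc mult_zero_right)
  finally show ?thesis .
qed

lemma minimals_level_orthogonal:
  assumes e: "e \<in> minimals Sg (level i)" and e': "e' \<in> minimals Sg (level j)" and "e \<noteq> e'"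
  shows "e * e' = 0"
proof -
  have commute: "e * e' = e' * e"
    using minimal_central_idempotent[OF central_idempotent_level e subgroup_Nset_level[OF e]]
    by (rule central_idempotent_commute)
  consider "i = j" | "i < j" | "j < i"
    by linarith
  then show ?thesis
  proof cases
    case 1
    then show ?thesis
      using minimal_in_orthogonal[OF Bsg_commutative_band[OF central_idempotent_level]] e e' \<open>e \<noteq> e'\<close>
      by (simp add: mem_minimals)
  next
    case 2
    then show ?thesis
      using minimals_level_orthogonal_less[OF e e'] commute by simp
  next
    case 3
    then show ?thesis
      by (rule minimals_level_orthogonal_less[OF e' e])
  qed
qed

lemma minimals_level_disjoint:
  assumes "i \<noteq> j"
  shows "minimals Sg (level i) \<inter> minimals Sg (level j) = {}"
proof -
  have False if "e \<in> minimals Sg (level i)" "e \<in> minimals Sg (level j)" "i < j" for e i j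
    using minimals_level_orthogonal_less[OF that] minimal_idem[OF central_idempotent_level that(1)]
      minimal_nonzero[OF central_idempotent_level that(1)] by simp
  with assms show ?thesis
    by (metis disjoint_iff linorder_neqE_nat)
qed

lemma level_eventually_zero: "\<exists>L. level L = 0"
proof (rule ccontr)
  assume "\<nexists>L. level L = 0"
  define surviving where "surviving j = {p \<in> range eps_prod. level j * p \<noteq> 0}" for j
  have "(surviving (Suc j), surviving j) \<in> finite_psubset" for j
  proof -
    have "level (Suc j) * p = 0" if "level j * p = 0" for p
      using level_Suc_mult[of j] that by (metis mult.assoc mult_zero_right)
    then have "surviving (Suc j) \<subseteq> surviving j"
      unfolding surviving_def by (auto simp del: one_seq.simps)
    moreover obtain e where e: "e \<in> minimals Sg (level j)"
      using minimals_nonempty[OF central_idempotent_level] \<open>\<nexists>L. level L = 0\<close> by blast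
    then obtain gs where gs: "e = level j * eps_prod gs"
      using minimal_generators[OF central_idempotent_level] by blast
    then have "eps_prod gs \<in> surviving j - surviving (Suc j)"
      using minimal_nonzero[OF central_idempotent_level e] level_Suc_mult_minimal[OF e] level_Suc_mult[of j]
      unfolding surviving_def by (auto simp: mult.assoc[symmetric])
    moreover have "finite (surviving j)"
      unfolding surviving_def using finite_eps_prods by simp
    ultimately show ?thesis
      unfolding finite_psubset_def by blast
  qed
  then show False
    using wf_finite_psubset wf_no_infinite_down_chainE by metis
qed

lemma sum_minimals_levels: "sum id (\<Union>j<L. minimals Sg (level j)) = 1 - level L"
proof -
  have "sum id (\<Union>j<L. minimals Sg (level j)) = (\<Sum>j<L. sum id (minimals Sg (level j)))"
    using minimals_level_disjoint finite_minimals[OF central_idempotent_level]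
    by (intro sum.UNION_disjoint) auto
  also have "\<dots> = (\<Sum>j<L. level j - level (Suc j))"
    by simp
  also have "\<dots> = 1 - level L"
    unfolding sum_lessThan_telescope' by simp
  finally show ?thesis .
qed

end

theorem mainTheorem12:
  fixes Sg :: "'g::group_add \<Rightarrow> 'a::ring_1 set"
  assumes "epsilon_strongly_graded Sg"
    and "finite {g. Sg g \<noteq> {0}}"
    and "\<forall>j. one_seq Sg j \<noteq> 0 \<longrightarrow>
           (\<forall>e \<in> minimals Sg (one_seq Sg j). is_subgroup (Nset Sg (one_seq Sg j) e))"
  shows "(\<exists>L. one_seq Sg L = 0) \<and>
    (\<exists>E :: 'a set. finite E \<and> sum id E = 1 \<and>
       (\<forall>e\<in>E. e \<noteq> 0 \<and> e * e = e \<and> (\<forall>x. e * x = x * e)) \<and>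
       (\<forall>e\<in>E. \<forall>e'\<in>E. e \<noteq> e' \<longrightarrow> e * e' = 0) \<and>
       (\<forall>e\<in>E.
          (\<exists>j. one_seq Sg j \<noteq> 0 \<and> e \<in> minimals Sg (one_seq Sg j) \<and>
               strongly_graded_by Sg e (Nset Sg (one_seq Sg j) e)) \<or>
          (\<exists>l. e = one_seq Sg l \<and> trivially_graded Sg e)))"
proof -
  interpret eps_central_graded_ring Sg
    using assms by unfold_locales
  obtain L where L: "level L = 0"
    using level_eventually_zero by blast
  define E where "E = (\<Union>j<L. minimals Sg (level j))"
  have "finite E"
    unfolding E_def using finite_minimals[OF central_idempotent_level] by blast
  moreover have "sum id E = 1"
    unfolding E_def sum_minimals_levels L by simp
  moreover have "e \<noteq> 0 \<and> central_idempotent e \<and> (\<exists>j. level j \<noteq> 0 \<and> e \<in> minimals Sg (level j) \<and>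
      strongly_graded_by Sg e (Nset Sg (level j) e))" if "e \<in> E" for e
  proof -
    obtain j where e: "e \<in> minimals Sg (level j)"
      using \<open>e \<in> E\<close> unfolding E_def by blast
    then have "level j \<noteq> 0"
      by auto
    with e show ?thesis
      using minimal_nonzero minimal_central_idempotent minimal_strongly_graded
        central_idempotent_level subgroup_Nset_level by blast
  qed
  moreover have "e * e' = 0" if "e \<in> E" "e' \<in> E" "e \<noteq> e'" for e e'
    using that minimals_level_orthogonal unfolding E_def by blast
  ultimately show ?thesis
    using L unfolding central_idempotent_def by blast
qed

end
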